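(* Let $\mathcal{A}$ be a finite real linear hyperplane arrangement, $B$ a region, and $\Delta\subseteq\Sigma[\mathcal{A}]$ a nonempty polyhedral subcomplex. Let $\operatorname{Des}_B(\Delta)=\{F\in\Sigma[\mathcal{A}]: F\overline{B}\in\Delta\}$ and $\mathcal{R}(\Delta)=\Delta\cap\mathcal{R}[\mathcal{A}]$. Then $\operatorname{Des}_B(\Delta)=\Delta$ if and only if $\Delta$ is pure and $\mathcal{R}(\Delta)$ is a nonempty upper set of the partial order $\preceq_B$.
   Context: $\Sigma[\mathcal{A}]$ is the set of faces of $\mathcal{A}$ (faces of the regions, which are closures of connected components of the complement of $\bigcup\mathcal{A}$), and $\mathcal{R}[\mathcal{A}]$ is the set of regions. A polyhedral subcomplex is a subset of $\Sigma[\mathcal{A}]$ closed under taking faces; it is pure if all its maximal elements have the same dimension. For each $\mathrm{H}\in\mathcal{A}$ fix halfspaces $\mathrm{H}^\pm$; the sign sequence $\sigma_{\mathrm{H}}(F)\in\{0,+,-\}$ records whether $F\subseteq \mathrm{H}$, or $F$ lies in $\mathrm{H}^+$ resp. $\mathrm{H}^-$ but not in $\mathrm{H}$. The Tits product $FG$ is the face with $\sigma_{\mathrm{H}}(FG)=\sigma_{\mathrm{H}}(F)$ if nonzero, else $\sigma_{\mathrm{H}}(G)$. $\overline{B}=-B$. The weak order with base region $B$: $C\preceq_B D$ iff the set of hyperplanes separating $B$ and $C$ is contained in the set separating $B$ and $D$. *)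

theory Defs
  imports "HOL-Analysis.Analysis"
begin

definition linear_hyperplane :: "'a::euclidean_space set \<Rightarrow> bool" where
  "linear_hyperplane H \<longleftrightarrow> (\<exists>a. a \<noteq> 0 \<and> H = {x. a \<bullet> x = 0})"

definition arrangement :: "'a::euclidean_space set set \<Rightarrow> bool" where
  "arrangement A \<longleftrightarrow> finite A \<and> (\<forall>H\<in>A. linear_hyperplane H)"

definition normal :: "'a::euclidean_space set \<Rightarrow> 'a" where
  "normal H = (SOME a. a \<noteq> 0 \<and> H = {x. a \<bullet> x = 0})"

definition hplus :: "'a::euclidean_space set \<Rightarrow> 'a set" where
  "hplus H = {x. normal H \<bullet> x \<ge> 0}"

definition hminus :: "'a::euclidean_space set \<Rightarrow> 'a set" where
  "hminus H = {x. normal H \<bullet> x \<le> 0}"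

definition regions :: "'a::euclidean_space set set \<Rightarrow> 'a set set" where
  "regions A = closure ` components (- \<Union>A)"

definition faces :: "'a::euclidean_space set set \<Rightarrow> 'a set set" where
  "faces A = {F. F \<noteq> {} \<and> (\<exists>R\<in>regions A. F face_of R)}"

datatype sgn = Zero | Pos | Neg

definition sigma :: "'a::euclidean_space set \<Rightarrow> 'a set \<Rightarrow> sgn" where
  "sigma H F = (if F \<subseteq> H then Zero else if F \<subseteq> hplus H then Pos else Neg)"

definition tits :: "'a::euclidean_space set set \<Rightarrow> 'a set \<Rightarrow> 'a set \<Rightarrow> 'a set" where
  "tits A F G = (THE K. K \<in> faces A \<and>
     (\<forall>H\<in>A. sigma H K = (if sigma H F \<noteq> Zero then sigma H F else sigma H G)))"

definition opp :: "'a::euclidean_space set \<Rightarrow> 'a set" where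
  "opp B = uminus ` B"

definition separating :: "'a::euclidean_space set set \<Rightarrow> 'a set \<Rightarrow> 'a set \<Rightarrow> 'a set set" where
  "separating A C D = {H\<in>A. sigma H C \<noteq> sigma H D}"

definition weak_le :: "'a::euclidean_space set set \<Rightarrow> 'a set \<Rightarrow> 'a set \<Rightarrow> 'a set \<Rightarrow> bool" where
  "weak_le A B C D \<longleftrightarrow> separating A B C \<subseteq> separating A B D"

definition subcomplex :: "'a::euclidean_space set set \<Rightarrow> 'a set set \<Rightarrow> bool" where
  "subcomplex A \<Delta> \<longleftrightarrow> \<Delta> \<subseteq> faces A \<and>
     (\<forall>F\<in>\<Delta>. \<forall>G\<in>faces A. G face_of F \<longrightarrow> G \<in> \<Delta>)"

definition pure :: "'a::euclidean_space set set \<Rightarrow> bool" where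
  "pure \<Delta> \<longleftrightarrow> (\<forall>F\<in>\<Delta>. \<forall>G\<in>\<Delta>.
     (\<forall>K\<in>\<Delta>. F \<subseteq> K \<longrightarrow> K = F) \<and> (\<forall>K\<in>\<Delta>. G \<subseteq> K \<longrightarrow> K = G)
       \<longrightarrow> aff_dim F = aff_dim G)"

definition Des :: "'a::euclidean_space set set \<Rightarrow> 'a set \<Rightarrow> 'a set set \<Rightarrow> 'a set set" where
  "Des A B \<Delta> = {F\<in>faces A. tits A F (opp B) \<in> \<Delta>}"

definition upper_set :: "'a::euclidean_space set set \<Rightarrow> 'a set \<Rightarrow> 'a set set \<Rightarrow> bool" where
  "upper_set A B S \<longleftrightarrow> S \<subseteq> regions A \<and>
     (\<forall>C\<in>S. \<forall>D\<in>regions A. weak_le A B C D \<longrightarrow> D \<in> S)"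

end

theory Submission
  imports Defs
begin

text \<open>Every face of the arrangement is the closed cell of points whose sign vector is below that
  of any point x of its relative interior, so faces are determined by their sign vectors. The Tits
  product F(-B) is then the region whose sign vector agrees with F where F is off the hyperplanes
  and with -B on them, and F is a face of it; hence Des_B(\<Delta>) = \<Delta> says exactly that \<Delta> is
  closed under F \<mapsto> F(-B). Given this closure, a maximal face M of \<Delta> equals M(-B), so it is a
  region: \<Delta> is pure and contains a region. For upward closure let C \<in> \<Delta> lie below D. On the
  segment from a point of C to a point of D, the first crossing point spans a wall G of C all of
  whose hyperplanes separate C from D; none of them separates B from C, so G(-B) \<in> \<Delta> is the
  region across that wall, still below D and separated from it by fewer hyperplanes. Conversely,
  for F \<in> \<Delta> choose a maximal M \<supseteq> F in \<Delta>; purity makes M a region, every hyperplane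
  separating B from M separates B from F(-B), and upward closure gives F(-B) \<in> \<Delta>.\<close>

section \<open>Sign vectors and sign cones\<close>

definition hsign :: "'a::euclidean_space set \<Rightarrow> 'a \<Rightarrow> sgn" where
  "hsign H x = (if normal H \<bullet> x = 0 then Zero else if normal H \<bullet> x > 0 then Pos else Neg)"

definition closed_side :: "'a::euclidean_space set \<Rightarrow> sgn \<Rightarrow> 'a set" where
  "closed_side H s = (case s of
      Zero \<Rightarrow> {y. normal H \<bullet> y = 0}
    | Pos \<Rightarrow> {y. normal H \<bullet> y \<ge> 0}
    | Neg \<Rightarrow> {y. normal H \<bullet> y \<le> 0})"

definition sign_cone :: "'a::euclidean_space set set \<Rightarrow> ('a set \<Rightarrow> sgn) \<Rightarrow> 'a set" where
  "sign_cone A s = (\<Inter>H\<in>A. closed_side H (s H))"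

abbreviation cell :: "'a::euclidean_space set set \<Rightarrow> 'a \<Rightarrow> 'a set" where
  "cell A x \<equiv> sign_cone A (\<lambda>H. hsign H x)"

fun opp_sgn :: "sgn \<Rightarrow> sgn" where
  "opp_sgn Zero = Zero" | "opp_sgn Pos = Neg" | "opp_sgn Neg = Pos"

lemma opp_sgn_if_nonzero_neq:
  "s \<noteq> Zero \<Longrightarrow> t \<noteq> Zero \<Longrightarrow> s \<noteq> t \<Longrightarrow> t = opp_sgn s"
  by (cases s; cases t) auto

lemma arrangement_normal:
  assumes "arrangement A" "H \<in> A"
  shows "normal H \<noteq> 0" "H = {x. normal H \<bullet> x = 0}"
proof -
  from assms obtain a where "a \<noteq> 0 \<and> H = {x. a \<bullet> x = 0}"
    unfolding arrangement_def linear_hyperplane_def by blast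
  then have "normal H \<noteq> 0 \<and> H = {x. normal H \<bullet> x = 0}"
    unfolding normal_def by (rule someI)
  then show "normal H \<noteq> 0" "H = {x. normal H \<bullet> x = 0}" by blast+
qed

lemma mem_arrangement_iff_hsign_Zero:
  assumes "arrangement A" "H \<in> A"
  shows "x \<in> H \<longleftrightarrow> hsign H x = Zero"
proof -
  have "x \<in> H \<longleftrightarrow> x \<in> {y. normal H \<bullet> y = 0}"
    by (rule arg_cong[OF arrangement_normal(2)[OF assms]])
  then show ?thesis by (simp add: hsign_def)
qed

lemma notin_Union_arrangement_iff:
  "arrangement A \<Longrightarrow> x \<notin> \<Union>A \<longleftrightarrow> (\<forall>H\<in>A. hsign H x \<noteq> Zero)"
  using mem_arrangement_iff_hsign_Zero by blast

lemma hsign_uminus: "hsign H (- x) = opp_sgn (hsign H x)"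
  by (simp add: hsign_def)

lemma mem_closed_side_uminus: "- y \<in> closed_side H s \<longleftrightarrow> y \<in> closed_side H (opp_sgn s)"
  by (cases s) (auto simp: closed_side_def)

lemma mem_sign_cone: "y \<in> sign_cone A s \<longleftrightarrow> (\<forall>H\<in>A. y \<in> closed_side H (s H))"
  by (simp add: sign_cone_def)

lemma mem_cell: "x \<in> cell A x"
  by (auto simp: mem_sign_cone closed_side_def hsign_def split: sgn.split)

lemma hsign_eq_if_closed_side: "x \<in> closed_side H s \<Longrightarrow> hsign H x \<noteq> Zero \<Longrightarrow> hsign H x = s"
  by (cases s) (auto simp: closed_side_def hsign_def)

lemma sign_cone_cong: "(\<And>H. H \<in> A \<Longrightarrow> s H = t H) \<Longrightarrow> sign_cone A s = sign_cone A t"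
  by (simp add: sign_cone_def)

lemma convex_sign_cone: "convex (sign_cone A s)"
  unfolding sign_cone_def closed_side_def
  by (intro convex_INT) (simp split: sgn.split add: convex_hyperplane convex_halfspace_ge convex_halfspace_le)

lemma closed_sign_cone: "closed (sign_cone A s)"
  unfolding sign_cone_def closed_side_def
  by (intro closed_INT) (simp split: sgn.split add: closed_hyperplane closed_halfspace_ge closed_halfspace_le)

lemma sigma_eq_hsign:
  assumes "arrangement A" "H \<in> A" "x \<in> F" "F \<subseteq> closed_side H (hsign H x)"
  shows "sigma H F = hsign H x"
proof (cases "hsign H x")
  case Zero
  then have "F \<subseteq> H"
    using assms(4) mem_arrangement_iff_hsign_Zero[OF assms(1,2)]
    by (auto simp: closed_side_def hsign_def)
  then show ?thesis using Zero by (simp add: sigma_def)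
next
  case Pos
  then have "x \<notin> H" "F \<subseteq> hplus H"
    using assms(4) mem_arrangement_iff_hsign_Zero[OF assms(1,2)]
    by (auto simp: closed_side_def hplus_def)
  then show ?thesis using Pos assms(3) by (auto simp: sigma_def)
next
  case Neg
  then have "x \<notin> H" "x \<notin> hplus H"
    using mem_arrangement_iff_hsign_Zero[OF assms(1,2)]
    by (auto simp: hplus_def hsign_def split: if_splits)
  then show ?thesis using Neg assms(3) by (auto simp: sigma_def)
qed

lemma sigma_cell: "arrangement A \<Longrightarrow> H \<in> A \<Longrightarrow> sigma H (cell A x) = hsign H x"
  by (rule sigma_eq_hsign) (auto simp: mem_cell mem_sign_cone)

lemma hsign_le_if_mem_sign_cone:
  "x \<in> sign_cone A s \<Longrightarrow> H \<in> A \<Longrightarrow> hsign H x = Zero \<or> hsign H x = s H"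
  using hsign_eq_if_closed_side by (auto simp: mem_sign_cone)

lemma sign_cone_mono:
  assumes "\<And>H. H \<in> A \<Longrightarrow> t H = Zero \<or> t H = s H"
  shows "sign_cone A t \<subseteq> sign_cone A s"
proof -
  have "closed_side H Zero \<subseteq> closed_side H u" for H u
    by (cases u) (auto simp: closed_side_def)
  then show ?thesis using assms by (fastforce simp: mem_sign_cone)
qed

lemma sign_cone_Int_hyperplane_face_of:
  assumes "H \<in> A"
  shows "sign_cone A s \<inter> {y. normal H \<bullet> y = 0} face_of sign_cone A s"
proof -
  have side: "y \<in> closed_side H (s H)" if "y \<in> sign_cone A s" for y
    using that assms by (simp add: mem_sign_cone)
  show ?thesis
  proof (cases "s H = Pos")
    case True
    then show ?thesis using side
      by (intro face_of_Int_supporting_hyperplane_ge convex_sign_cone) (auto simp: closed_side_def)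
  next
    case False
    then have "s H = Zero \<or> s H = Neg" by (cases "s H") auto
    then show ?thesis using side
      by (intro face_of_Int_supporting_hyperplane_le convex_sign_cone) (auto simp: closed_side_def)
  qed
qed

lemma sign_cone_face_of:
  assumes le: "\<And>H. H \<in> A \<Longrightarrow> t H = Zero \<or> t H = s H"
  shows "sign_cone A t face_of sign_cone A s"
proof -
  let ?S = "sign_cone A s"
  let ?walls = "(\<lambda>H. ?S \<inter> {y. normal H \<bullet> y = 0}) ` {H\<in>A. t H = Zero}"
  have "sign_cone A t = \<Inter>(insert ?S ?walls)"
  proof
    have "normal H \<bullet> y = 0" if "y \<in> sign_cone A t" "H \<in> A" "t H = Zero" for y H
    proof -
      have "y \<in> closed_side H (t H)" using that(1,2) by (simp add: mem_sign_cone)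
      then show ?thesis using that(3) by (simp add: closed_side_def)
    qed
    then show "sign_cone A t \<subseteq> \<Inter>(insert ?S ?walls)"
      using sign_cone_mono[of A t s, OF le] by auto
    show "\<Inter>(insert ?S ?walls) \<subseteq> sign_cone A t"
    proof
      fix y assume y: "y \<in> \<Inter>(insert ?S ?walls)"
      have "y \<in> closed_side H (t H)" if "H \<in> A" for H
      proof (cases "t H = Zero")
        case True
        then have "?S \<inter> {y. normal H \<bullet> y = 0} \<in> insert ?S ?walls" using that by blast
        then have "y \<in> ?S \<inter> {y. normal H \<bullet> y = 0}" using y by (rule InterD[rotated])
        then show ?thesis using True by (simp add: closed_side_def)
      next
        case False
        then show ?thesis using y that le[OF that] by (auto simp: mem_sign_cone)
      qed
      then show "y \<in> sign_cone A t" by (simp add: mem_sign_cone)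
    qed
  qed
  moreover have "\<Inter>(insert ?S ?walls) face_of ?S"
    by (intro face_of_Inter) (auto intro: face_of_refl convex_sign_cone sign_cone_Int_hyperplane_face_of)
  ultimately show ?thesis by simp
qed

lemma cell_face_of_sign_cone: "x \<in> sign_cone A s \<Longrightarrow> cell A x face_of sign_cone A s"
  by (intro sign_cone_face_of hsign_le_if_mem_sign_cone)

lemma exists_perturbation_hsign:
  fixes x v :: "'a::euclidean_space"
  assumes "finite A"
  obtains e :: real where "0 < e"
    "\<And>H. H \<in> A \<Longrightarrow> hsign H (x + e *\<^sub>R v) = (if hsign H x = Zero then hsign H v else hsign H x)"
proof -
  let ?s = "\<lambda>H. if hsign H x = Zero then hsign H v else hsign H x"
  have stable: "\<forall>\<^sub>F e in at_right 0. hsign H (x + e *\<^sub>R v) = ?s H" for H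
  proof (cases "hsign H x = Zero")
    case True
    then have "hsign H (x + e *\<^sub>R v) = hsign H v" if "0 < e" for e
      using that by (auto simp: hsign_def inner_add_right zero_less_mult_iff mult_less_0_iff)
    then show ?thesis
      using True by (auto intro: eventually_mono[OF eventually_at_right_less])
  next
    case False
    have lim: "((\<lambda>e. normal H \<bullet> (x + e *\<^sub>R v)) \<longlongrightarrow> normal H \<bullet> x) (at_right 0)"
      by (auto simp: inner_add_right intro!: tendsto_eq_intros)
    consider "normal H \<bullet> x > 0" | "normal H \<bullet> x < 0"
      using False by (auto simp: hsign_def split: if_splits)
    then show ?thesis
    proof cases
      case 1
      then show ?thesis using order_tendstoD(1)[OF lim 1]
        by (auto simp: hsign_def elim: eventually_mono)
    next
      case 2
      then show ?thesis using order_tendstoD(2)[OF lim 2]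
        by (auto simp: hsign_def elim: eventually_mono)
    qed
  qed
  have "\<forall>\<^sub>F e in at_right 0. \<forall>H\<in>A. hsign H (x + e *\<^sub>R v) = ?s H"
    by (intro eventually_ball_finite[OF assms] ballI stable)
  then have "\<forall>\<^sub>F e in at_right 0. 0 < e \<and> (\<forall>H\<in>A. hsign H (x + e *\<^sub>R v) = ?s H)"
    by (rule eventually_conj[OF eventually_at_right_less])
  then show ?thesis
    using that eventually_happens'[OF trivial_limit_at_right_real] by blast
qed

lemma face_subset_cell:
  assumes "F face_of sign_cone A s" "x \<in> rel_interior F"
  shows "F \<subseteq> cell A x"
proof
  fix y assume "y \<in> F"
  have "y \<in> closed_side H (hsign H x)" if "H \<in> A" for H
  proof (cases "hsign H x = Zero")
    case True
    have xF: "x \<in> F" using assms(2) rel_interior_subset by blast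
    have "F \<subseteq> sign_cone A s \<inter> {y. normal H \<bullet> y = 0}"
    proof (rule subset_of_face_of[OF sign_cone_Int_hyperplane_face_of[OF that]])
      show "F \<subseteq> sign_cone A s" using assms(1) by (rule face_of_imp_subset)
      show "(sign_cone A s \<inter> {y. normal H \<bullet> y = 0}) \<inter> rel_interior F \<noteq> {}"
        using True xF assms face_of_imp_subset by (fastforce simp: hsign_def split: if_splits)
    qed
    then show ?thesis using True \<open>y \<in> F\<close> by (auto simp: closed_side_def)
  next
    case False
    have "x \<in> sign_cone A s" "y \<in> sign_cone A s"
      using assms face_of_imp_subset rel_interior_subset \<open>y \<in> F\<close> by blast+
    then show ?thesis
      using False that hsign_le_if_mem_sign_cone[of x A s H] by (auto simp: mem_sign_cone)
  qed
  then show "y \<in> cell A x" by (simp add: mem_sign_cone)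
qed

lemma cell_subset_face:
  assumes "finite A" "F face_of sign_cone A s" "x \<in> F"
  shows "cell A x \<subseteq> F"
proof
  fix y assume y: "y \<in> cell A x"
  show "y \<in> F"
  proof (cases "y = x")
    case True
    then show ?thesis using assms(3) by simp
  next
    case False
    \<comment> \<open>z stays in the cell of x and x lies strictly between z and y, so y \<in> F as F is a face\<close>
    obtain e where e: "0 < e" and
      sgn_z: "\<And>H. H \<in> A \<Longrightarrow> hsign H (x + e *\<^sub>R (x - y)) =
        (if hsign H x = Zero then hsign H (x - y) else hsign H x)"
      using exists_perturbation_hsign[OF assms(1)] by blast
    define z where "z = x + e *\<^sub>R (x - y)"
    have "hsign H z = hsign H x" if "H \<in> A" for H
      using sgn_z[OF that] y that
      by (auto simp: z_def mem_sign_cone closed_side_def hsign_def inner_diff_right)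
    then have "z \<in> cell A x"
      using mem_cell[of z A] sign_cone_cong[of A "\<lambda>H. hsign H z" "\<lambda>H. hsign H x"] by simp
    moreover have "x \<in> open_segment z y"
    proof -
      define u where "u = e / (1 + e)"
      have "0 < u" "u < 1" using e by (auto simp: u_def)
      moreover have "(1 - u) *\<^sub>R z + u *\<^sub>R y = x + ((1 - u) * e - u) *\<^sub>R (x - y)"
        by (simp add: z_def algebra_simps)
      moreover have "(1 - u) * e - u = 0" using e by (simp add: u_def field_simps)
      moreover have "z \<noteq> y"
      proof
        assume "z = y"
        then have "(1 + e) *\<^sub>R (x - y) = 0" by (simp add: z_def algebra_simps)
        then show False using e False by simp
      qed
      ultimately show ?thesis by (auto simp: in_segment)
    qed
    moreover have "cell A x \<subseteq> sign_cone A s"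
      using assms(2,3) face_of_imp_subset
      by (intro sign_cone_mono hsign_le_if_mem_sign_cone) blast
    ultimately show ?thesis using y assms(2,3) face_ofD by blast
  qed
qed

lemma face_of_sign_cone_eq_cell:
  assumes "finite A" "F face_of sign_cone A s" "x \<in> rel_interior F"
  shows "F = cell A x"
  using assms face_subset_cell cell_subset_face rel_interior_subset by (metis subset_antisym subsetD)

section \<open>Regions and faces as cells\<close>

definition open_cell :: "'a::euclidean_space set set \<Rightarrow> 'a \<Rightarrow> 'a set" where
  "open_cell A x = {y. \<forall>H\<in>A. hsign H y = hsign H x}"

lemma hsign_level_eq:
  "{y. hsign H y = Zero} = {y. normal H \<bullet> y = 0}"
  "{y. hsign H y = Pos} = {y. normal H \<bullet> y > 0}"
  "{y. hsign H y = Neg} = {y. normal H \<bullet> y < 0}"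
  by (auto simp: hsign_def)

lemma open_cell_eq_INT: "open_cell A x = (\<Inter>H\<in>A. {y. hsign H y = hsign H x})"
  by (auto simp: open_cell_def)

lemma open_open_cell:
  assumes "finite A" "\<forall>H\<in>A. hsign H x \<noteq> Zero"
  shows "open (open_cell A x)"
proof -
  have "open {y. hsign H y = s}" if "s \<noteq> Zero" for H s
    using that by (cases s) (simp_all add: hsign_level_eq open_halfspace_gt open_halfspace_lt)
  then show ?thesis using assms unfolding open_cell_eq_INT by (intro open_INT) auto
qed

lemma convex_hsign_level: "convex {y. hsign H y = s}"
  by (cases s) (simp_all add: hsign_level_eq convex_hyperplane convex_halfspace_gt convex_halfspace_lt)

lemma convex_open_cell: "convex (open_cell A x)"
  unfolding open_cell_eq_INT by (intro convex_INT convex_hsign_level)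

lemma open_cell_subset_cell: "open_cell A x \<subseteq> cell A x"
proof
  fix y assume "y \<in> open_cell A x"
  then have "cell A y = cell A x" by (intro sign_cone_cong) (simp add: open_cell_def)
  then show "y \<in> cell A x" using mem_cell[of y A] by simp
qed

lemma connected_component_eq_open_cell:
  assumes arr: "arrangement A" and x: "x \<notin> \<Union>A"
  shows "connected_component_set (- \<Union>A) x = open_cell A x"
proof
  have "open_cell A x \<subseteq> - \<Union>A"
  proof
    fix y assume "y \<in> open_cell A x"
    moreover have "\<forall>H\<in>A. hsign H x \<noteq> Zero" using x notin_Union_arrangement_iff[OF arr] by blast
    ultimately have "\<forall>H\<in>A. hsign H y \<noteq> Zero" by (simp add: open_cell_def)
    then show "y \<in> - \<Union>A" using notin_Union_arrangement_iff[OF arr] by blast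
  qed
  then show "open_cell A x \<subseteq> connected_component_set (- \<Union>A) x"
  proof (rule connected_component_maximal[rotated 2])
    show "x \<in> open_cell A x" by (simp add: open_cell_def)
    show "connected (open_cell A x)" by (rule convex_connected[OF convex_open_cell])
  qed
next
  let ?C = "connected_component_set (- \<Union>A) x"
  have off_walls: "hsign H z \<noteq> Zero" if "z \<in> ?C" "H \<in> A" for z H
    using that connected_component_subset mem_arrangement_iff_hsign_Zero[OF arr] by blast
  have "hsign H y = hsign H x" if y: "y \<in> ?C" and H: "H \<in> A" for y H
  proof (rule ccontr)
    assume ne: "hsign H y \<noteq> hsign H x"
    have "x \<in> ?C" using x by simp
    then have "hsign H y \<noteq> Zero" "hsign H x \<noteq> Zero" using off_walls y H by blast+
    then have "normal H \<bullet> x \<le> 0 \<and> 0 \<le> normal H \<bullet> y \<or> normal H \<bullet> y \<le> 0 \<and> 0 \<le> normal H \<bullet> x"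
      using ne unfolding hsign_def by argo
    then obtain z where "z \<in> ?C" "normal H \<bullet> z = 0"
      using connected_ivt_hyperplane[OF connected_connected_component \<open>x \<in> ?C\<close> y]
        connected_ivt_hyperplane[OF connected_connected_component y \<open>x \<in> ?C\<close>] by blast
    then show False using off_walls[OF _ H] unfolding hsign_def by metis
  qed
  then show "?C \<subseteq> open_cell A x" by (auto simp: open_cell_def)
qed

lemma hsign_open_segment:
  assumes "hsign H x \<noteq> Zero" "y \<in> closed_side H (hsign H x)" "u \<in> open_segment x y"
  shows "hsign H u = hsign H x"
proof -
  obtain t where t: "0 < t" "t < 1" "u = (1 - t) *\<^sub>R x + t *\<^sub>R y"
    using assms(3) by (auto simp: in_segment)
  have u: "normal H \<bullet> u = (1 - t) * (normal H \<bullet> x) + t * (normal H \<bullet> y)"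
    by (simp add: t(3) inner_add_right)
  consider "normal H \<bullet> x > 0" "normal H \<bullet> y \<ge> 0" | "normal H \<bullet> x < 0" "normal H \<bullet> y \<le> 0"
    using assms(1,2) by (cases "hsign H x") (auto simp: hsign_def closed_side_def split: if_splits)
  then show ?thesis
  proof cases
    case 1
    then have "normal H \<bullet> u > 0" unfolding u using t by (intro add_pos_nonneg) simp_all
    then show ?thesis using 1 by (simp add: hsign_def)
  next
    case 2
    then have "normal H \<bullet> u < 0" unfolding u using t
      by (intro add_neg_nonpos) (simp_all add: mult_pos_neg mult_nonneg_nonpos)
    then show ?thesis using 2 by (simp add: hsign_def)
  qed
qed

lemma closure_open_cell:
  assumes "\<forall>H\<in>A. hsign H x \<noteq> Zero"
  shows "closure (open_cell A x) = cell A x"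
proof
  show "closure (open_cell A x) \<subseteq> cell A x"
    by (rule closure_minimal[OF open_cell_subset_cell closed_sign_cone])
  show "cell A x \<subseteq> closure (open_cell A x)"
  proof
    fix y assume y: "y \<in> cell A x"
    have "open_segment x y \<subseteq> open_cell A x"
      using assms y hsign_open_segment by (fastforce simp: open_cell_def mem_sign_cone)
    then have "closure (open_segment x y) \<subseteq> closure (open_cell A x)" by (rule closure_mono)
    moreover have "x \<in> closure (open_cell A x)"
      using closure_subset by (fastforce simp: open_cell_def)
    ultimately show "y \<in> closure (open_cell A x)" by (cases "x = y") auto
  qed
qed

lemma regions_eq_cells:
  assumes arr: "arrangement A"
  shows "regions A = cell A ` {x. \<forall>H\<in>A. hsign H x \<noteq> Zero}"
proof -
  have "regions A = (\<lambda>x. closure (connected_component_set (- \<Union>A) x)) ` (- \<Union>A)"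
    unfolding regions_def components_def by (simp add: image_image)
  also have "\<dots> = cell A ` (- \<Union>A)"
  proof (rule image_cong[OF refl])
    fix x assume "x \<in> - \<Union>A"
    then have "x \<notin> \<Union>A" "\<forall>H\<in>A. hsign H x \<noteq> Zero"
      using notin_Union_arrangement_iff[OF arr] by blast+
    then show "closure (connected_component_set (- \<Union>A) x) = cell A x"
      by (simp add: connected_component_eq_open_cell[OF arr] closure_open_cell)
  qed
  finally show ?thesis using notin_Union_arrangement_iff[OF arr] by auto
qed

lemma regionsE:
  assumes "arrangement A" "R \<in> regions A"
  obtains x where "\<forall>H\<in>A. hsign H x \<noteq> Zero" "R = cell A x"
  using assms regions_eq_cells by blast

lemma cell_in_regions:
  "arrangement A \<Longrightarrow> \<forall>H\<in>A. hsign H x \<noteq> Zero \<Longrightarrow> cell A x \<in> regions A"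
  using regions_eq_cells by blast

lemma faces_cellE:
  assumes arr: "arrangement A" and F: "F \<in> faces A"
  obtains x where "F = cell A x" "\<And>H. H \<in> A \<Longrightarrow> sigma H F = hsign H x"
proof -
  obtain R where R: "R \<in> regions A" "F face_of R" and "F \<noteq> {}"
    using F by (auto simp: faces_def)
  obtain x0 where "R = cell A x0" using regionsE[OF arr R(1)] by blast
  moreover obtain x where "x \<in> rel_interior F"
    using \<open>F \<noteq> {}\<close> face_of_imp_convex[OF R(2)] rel_interior_eq_empty by blast
  ultimately have "F = cell A x"
    using face_of_sign_cone_eq_cell R(2) arr by (auto simp: arrangement_def)
  then show ?thesis using that sigma_cell[OF arr] by simp
qed

lemma cell_in_faces:
  assumes arr: "arrangement A" and "R \<in> regions A" "x \<in> R"
  shows "cell A x \<in> faces A"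
proof -
  obtain x0 where "R = cell A x0" using regionsE[OF arr \<open>R \<in> regions A\<close>] by blast
  then have "cell A x face_of R" using \<open>x \<in> R\<close> by (simp add: cell_face_of_sign_cone)
  then show ?thesis using assms(2) mem_cell[of x A] by (auto simp: faces_def)
qed

lemma regions_subset_faces: "arrangement A \<Longrightarrow> regions A \<subseteq> faces A"
  by (metis cell_in_faces mem_cell regionsE subsetI)

lemma faces_eqI:
  assumes arr: "arrangement A" and "F \<in> faces A" "G \<in> faces A"
    and "\<And>H. H \<in> A \<Longrightarrow> sigma H F = sigma H G"
  shows "F = G"
proof -
  obtain x y where "F = cell A x" "G = cell A y"
    and "\<And>H. H \<in> A \<Longrightarrow> sigma H F = hsign H x" "\<And>H. H \<in> A \<Longrightarrow> sigma H G = hsign H y"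
    using faces_cellE[OF arr \<open>F \<in> faces A\<close>] faces_cellE[OF arr \<open>G \<in> faces A\<close>] by metis
  then show ?thesis using assms(4) sign_cone_cong[of A "\<lambda>H. hsign H x" "\<lambda>H. hsign H y"] by simp
qed

lemma face_subset_closed_side:
  assumes arr: "arrangement A" and "F \<in> faces A" "H \<in> A"
  shows "F \<subseteq> closed_side H (sigma H F)"
proof -
  obtain x where "F = cell A x" "sigma H F = hsign H x"
    using faces_cellE[OF arr \<open>F \<in> faces A\<close>] \<open>H \<in> A\<close> by metis
  then show ?thesis using \<open>H \<in> A\<close> by (auto simp: mem_sign_cone)
qed

lemma sigma_le_if_subset:
  assumes arr: "arrangement A" and "F \<in> faces A" "G \<in> faces A" "F \<subseteq> G" "H \<in> A"
  shows "sigma H F = Zero \<or> sigma H F = sigma H G"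
proof -
  obtain x where "F = cell A x" "sigma H F = hsign H x"
    using faces_cellE[OF arr \<open>F \<in> faces A\<close>] \<open>H \<in> A\<close> by metis
  moreover have "x \<in> closed_side H (sigma H G)"
    using face_subset_closed_side[OF arr \<open>G \<in> faces A\<close> \<open>H \<in> A\<close>] \<open>F \<subseteq> G\<close> mem_cell calculation(1)
    by blast
  ultimately show ?thesis using hsign_eq_if_closed_side by metis
qed

lemma face_of_if_sigma_le:
  assumes arr: "arrangement A" and "F \<in> faces A" "G \<in> faces A"
    and "\<And>H. H \<in> A \<Longrightarrow> sigma H F = Zero \<or> sigma H F = sigma H G"
  shows "F face_of G"
proof -
  obtain x y where "F = cell A x" "G = cell A y"
    and "\<And>H. H \<in> A \<Longrightarrow> sigma H F = hsign H x" "\<And>H. H \<in> A \<Longrightarrow> sigma H G = hsign H y"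
    using faces_cellE[OF arr \<open>F \<in> faces A\<close>] faces_cellE[OF arr \<open>G \<in> faces A\<close>] by metis
  then show ?thesis using assms(4) by (simp add: sign_cone_face_of)
qed

lemma face_in_regions_iff_sigma:
  assumes arr: "arrangement A" and "F \<in> faces A"
  shows "F \<in> regions A \<longleftrightarrow> (\<forall>H\<in>A. sigma H F \<noteq> Zero)"
proof -
  obtain x where "F = cell A x" "\<And>H. H \<in> A \<Longrightarrow> sigma H F = hsign H x"
    using faces_cellE[OF arr \<open>F \<in> faces A\<close>] by metis
  then show ?thesis using regionsE[OF arr] sigma_cell[OF arr] cell_in_regions[OF arr] by metis
qed

lemma finite_faces:
  assumes arr: "arrangement A"
  shows "finite (faces A)"
proof -
  have sub: "faces A \<subseteq> sign_cone A ` (A \<rightarrow>\<^sub>E UNIV)"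
  proof
    fix F assume "F \<in> faces A"
    then obtain x where "F = cell A x" using faces_cellE[OF arr] by metis
    also have "\<dots> = sign_cone A (restrict (\<lambda>H. hsign H x) A)" by (rule sign_cone_cong) simp
    finally have "F = sign_cone A (restrict (\<lambda>H. hsign H x) A)" .
    moreover have "restrict (\<lambda>H. hsign H x) A \<in> A \<rightarrow>\<^sub>E UNIV" by simp
    ultimately show "F \<in> sign_cone A ` (A \<rightarrow>\<^sub>E UNIV)" by blast
  qed
  have "finite (UNIV :: sgn set)"
    by (rule finite_subset[of _ "{Zero, Pos, Neg}"]) (auto intro: sgn.exhaust)
  then have "finite (A \<rightarrow>\<^sub>E (UNIV :: sgn set))"
    using arr by (intro finite_PiE) (simp_all add: arrangement_def)
  then show ?thesis by (rule finite_subset[OF sub finite_imageI])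
qed

lemma region_maximal:
  assumes arr: "arrangement A" and R: "R \<in> regions A" and "K \<in> faces A" "R \<subseteq> K"
  shows "K = R"
proof (rule faces_eqI[OF arr \<open>K \<in> faces A\<close>])
  show "R \<in> faces A" using R regions_subset_faces[OF arr] by blast
  show "sigma H K = sigma H R" if "H \<in> A" for H
    using sigma_le_if_subset[OF arr \<open>R \<in> faces A\<close> assms(3,4) that]
      face_in_regions_iff_sigma[OF arr \<open>R \<in> faces A\<close>] R that by auto
qed

lemma face_in_regions_iff_aff_dim:
  fixes A :: "'a::euclidean_space set set"
  assumes arr: "arrangement A" and F: "F \<in> faces A"
  shows "F \<in> regions A \<longleftrightarrow> aff_dim F = DIM('a)"
proof
  assume "F \<in> regions A"
  then obtain x where x: "\<forall>H\<in>A. hsign H x \<noteq> Zero" "F = cell A x"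
    using regionsE[OF arr] by metis
  have "open_cell A x \<subseteq> interior F"
    unfolding x(2) using x(1) arr
    by (intro interior_maximal open_cell_subset_cell open_open_cell) (simp_all add: arrangement_def)
  moreover have "x \<in> open_cell A x" by (simp add: open_cell_def)
  ultimately show "aff_dim F = DIM('a)" by (intro aff_dim_nonempty_interior) blast
next
  assume dim: "aff_dim F = DIM('a)"
  show "F \<in> regions A"
    unfolding face_in_regions_iff_sigma[OF arr F]
  proof
    fix H assume H: "H \<in> A"
    show "sigma H F \<noteq> Zero"
    proof
      assume "sigma H F = Zero"
      then have "F \<subseteq> {y. normal H \<bullet> y = 0}"
        using face_subset_closed_side[OF arr F H] by (simp add: closed_side_def)
      then have "aff_dim F \<le> aff_dim {y::'a. normal H \<bullet> y = 0}" by (rule aff_dim_subset)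
      also have "\<dots> = int DIM('a) - 1"
        using aff_dim_hyperplane[OF arrangement_normal(1)[OF arr H]] by simp
      finally show False using dim by simp
    qed
  qed
qed

section \<open>The Tits product with a region\<close>

lemma tits_eqI:
  assumes arr: "arrangement A" and "K \<in> faces A"
    and "\<And>H. H \<in> A \<Longrightarrow> sigma H K = (if sigma H F \<noteq> Zero then sigma H F else sigma H G)"
  shows "tits A F G = K"
  unfolding tits_def using assms faces_eqI[OF arr] by (intro the_equality) auto

lemma tits_region:
  assumes arr: "arrangement A" and F: "F \<in> faces A" and R: "R \<in> regions A"
  shows "tits A F R \<in> regions A"
    and "\<And>H. H \<in> A \<Longrightarrow> sigma H (tits A F R) = (if sigma H F \<noteq> Zero then sigma H F else sigma H R)"
proof -
  obtain x where x: "F = cell A x" "\<And>H. H \<in> A \<Longrightarrow> sigma H F = hsign H x"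
    using faces_cellE[OF arr F] by metis
  obtain y where y: "\<forall>H\<in>A. hsign H y \<noteq> Zero" "R = cell A y"
    using regionsE[OF arr R] by metis
  have "finite A" using arr by (simp add: arrangement_def)
  then obtain e where "\<And>H. H \<in> A \<Longrightarrow>
      hsign H (x + e *\<^sub>R y) = (if hsign H x = Zero then hsign H y else hsign H x)"
    using exists_perturbation_hsign[of A x y] by blast
  then have z: "\<And>H. H \<in> A \<Longrightarrow>
      hsign H (x + e *\<^sub>R y) = (if sigma H F \<noteq> Zero then sigma H F else sigma H R)"
    using x(2) y(2) sigma_cell[OF arr] by simp
  have "cell A (x + e *\<^sub>R y) \<in> regions A"
    using z y(1) sigma_cell[OF arr] by (intro cell_in_regions[OF arr]) (simp add: y(2))
  moreover have "tits A F R = cell A (x + e *\<^sub>R y)"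
    using calculation regions_subset_faces[OF arr] z sigma_cell[OF arr]
    by (intro tits_eqI[OF arr]) auto
  ultimately show "tits A F R \<in> regions A"
    "\<And>H. H \<in> A \<Longrightarrow> sigma H (tits A F R) = (if sigma H F \<noteq> Zero then sigma H F else sigma H R)"
    using z sigma_cell[OF arr] by simp_all
qed

lemma face_of_tits:
  assumes arr: "arrangement A" and F: "F \<in> faces A" and R: "R \<in> regions A"
  shows "F face_of tits A F R"
  using tits_region[OF assms] regions_subset_faces[OF arr]
  by (intro face_of_if_sigma_le[OF arr F]) auto

lemma opp_region:
  assumes arr: "arrangement A" and B: "B \<in> regions A"
  shows "opp B \<in> regions A" and "\<And>H. H \<in> A \<Longrightarrow> sigma H (opp B) = opp_sgn (sigma H B)"
proof -
  obtain x where x: "\<forall>H\<in>A. hsign H x \<noteq> Zero" "B = cell A x"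
    using regionsE[OF arr B] by metis
  have "y \<in> opp B \<longleftrightarrow> - y \<in> B" for y
    unfolding opp_def by (metis image_eqI minus_minus imageE)
  then have "opp B = cell A (- x)"
    unfolding x(2) by (auto simp: mem_sign_cone mem_closed_side_uminus hsign_uminus)
  moreover have "\<forall>H\<in>A. hsign H (- x) \<noteq> Zero"
    using x(1) by (auto simp: hsign_uminus elim: opp_sgn.elims)
  ultimately show "opp B \<in> regions A" by (simp add: cell_in_regions[OF arr])
  show "sigma H (opp B) = opp_sgn (sigma H B)" if "H \<in> A" for H
    using \<open>opp B = cell A (- x)\<close> sigma_cell[OF arr that, of "- x"] sigma_cell[OF arr that, of x] x(2)
    by (simp add: hsign_uminus)
qed

section \<open>Walls\<close>

lemma exists_first_crossing:
  fixes c d :: "'a::euclidean_space"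
  assumes fin: "finite A" and c: "\<forall>H\<in>A. hsign H c \<noteq> Zero" and d: "\<forall>H\<in>A. hsign H d \<noteq> Zero"
    and cd: "\<exists>H\<in>A. hsign H c \<noteq> hsign H d"
  obtains p where "\<And>H. H \<in> A \<Longrightarrow> hsign H p = Zero \<or> hsign H p = hsign H c"
    and "\<exists>H\<in>A. hsign H p = Zero"
    and "\<And>H. H \<in> A \<Longrightarrow> hsign H p = Zero \<Longrightarrow> hsign H c \<noteq> hsign H d"
proof -
  define X where "X = {H\<in>A. hsign H c \<noteq> hsign H d}"
  \<comment> \<open>the segment from c to d crosses H \<in> X at parameter \<tau> H; p is the first of these crossings\<close>
  define \<tau> where "\<tau> H = (normal H \<bullet> c) / (normal H \<bullet> c - normal H \<bullet> d)" for H
  have opposite: "normal H \<bullet> c > 0 \<and> normal H \<bullet> d < 0 \<or> normal H \<bullet> c < 0 \<and> normal H \<bullet> d > 0"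
    if "H \<in> X" for H
    using that c d unfolding X_def hsign_def by (auto split: if_splits)
  have \<tau>_pos: "0 < \<tau> H" if "H \<in> X" for H
    using opposite[OF that] by (auto simp: \<tau>_def zero_less_divide_iff)
  have along: "normal H \<bullet> ((1 - t) *\<^sub>R c + t *\<^sub>R d) = normal H \<bullet> c * (1 - t / \<tau> H)"
    if "H \<in> X" for H t
    using opposite[OF that] by (auto simp: \<tau>_def inner_add_right inner_diff_right field_simps)
  have "finite X" "X \<noteq> {}" using fin cd by (auto simp: X_def)
  then have "Min (\<tau> ` X) \<in> \<tau> ` X" by simp
  then obtain H0 where "H0 \<in> X" "\<tau> H0 = Min (\<tau> ` X)" by (metis imageE)
  then have H0: "H0 \<in> X" "\<forall>H\<in>X. \<tau> H0 \<le> \<tau> H"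
    using \<open>finite X\<close> by auto
  define p where "p = (1 - \<tau> H0) *\<^sub>R c + \<tau> H0 *\<^sub>R d"
  have "\<tau> H0 < 1"
    using opposite[OF H0(1)] by (auto simp: \<tau>_def divide_simps)
  have before: "hsign H p = Zero \<or> hsign H p = hsign H c" if "H \<in> X" for H
  proof -
    have "0 \<le> 1 - \<tau> H0 / \<tau> H" using H0(2) \<tau>_pos that by (simp add: divide_le_eq_1)
    moreover have "normal H \<bullet> p = normal H \<bullet> c * (1 - \<tau> H0 / \<tau> H)"
      unfolding p_def by (rule along[OF that])
    ultimately show ?thesis by (auto simp: hsign_def zero_less_mult_iff mult_less_0_iff)
  qed
  have same: "hsign H p = hsign H c" if "H \<in> A" "H \<notin> X" for H
  proof -
    have "c \<in> {y. hsign H y = hsign H c}" "d \<in> {y. hsign H y = hsign H c}"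
      using that by (auto simp: X_def)
    then have "p \<in> {y. hsign H y = hsign H c}"
      unfolding p_def using \<open>\<tau> H0 < 1\<close> \<tau>_pos[OF H0(1)]
      by (intro convexD_alt[OF convex_hsign_level]) simp_all
    then show ?thesis by simp
  qed
  show ?thesis
  proof
    show "hsign H p = Zero \<or> hsign H p = hsign H c" if "H \<in> A" for H
      using before same that by blast
    have "normal H0 \<bullet> p = 0"
      using along[OF H0(1), of "\<tau> H0"] \<tau>_pos[OF H0(1)] by (simp add: p_def)
    then have "hsign H0 p = Zero" by (simp add: hsign_def)
    then show "\<exists>H\<in>A. hsign H p = Zero"
      using H0(1) unfolding X_def by blast
    show "hsign H c \<noteq> hsign H d" if "H \<in> A" "hsign H p = Zero" for H
      using same that c by (auto simp: X_def)
  qed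
qed

lemma exists_wall:
  assumes arr: "arrangement A" and C: "C \<in> regions A" and D: "D \<in> regions A" and "C \<noteq> D"
  obtains G where "G \<in> faces A" "G face_of C" "\<exists>H\<in>A. sigma H G = Zero"
    "\<And>H. H \<in> A \<Longrightarrow> sigma H G = Zero \<Longrightarrow> sigma H C \<noteq> sigma H D"
proof -
  obtain c where c: "\<forall>H\<in>A. hsign H c \<noteq> Zero" "C = cell A c"
    using regionsE[OF arr C] by metis
  obtain d where d: "\<forall>H\<in>A. hsign H d \<noteq> Zero" "D = cell A d"
    using regionsE[OF arr D] by metis
  have "\<exists>H\<in>A. hsign H c \<noteq> hsign H d"
  proof (rule ccontr)
    assume "\<not> (\<exists>H\<in>A. hsign H c \<noteq> hsign H d)"
    then have "C = D" unfolding c(2) d(2) by (intro sign_cone_cong) blast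
    then show False using \<open>C \<noteq> D\<close> by contradiction
  qed
  moreover have "finite A" using arr by (simp add: arrangement_def)
  ultimately obtain p where p: "\<And>H. H \<in> A \<Longrightarrow> hsign H p = Zero \<or> hsign H p = hsign H c"
    "\<exists>H\<in>A. hsign H p = Zero" "\<And>H. H \<in> A \<Longrightarrow> hsign H p = Zero \<Longrightarrow> hsign H c \<noteq> hsign H d"
    using exists_first_crossing[of A c d] c(1) d(1) by blast
  have "cell A p face_of C"
    unfolding c(2) using p(1) by (rule sign_cone_face_of)
  moreover have "p \<in> C"
    using face_of_imp_subset[OF calculation] mem_cell by blast
  ultimately have G: "cell A p \<in> faces A" "cell A p face_of C"
    using cell_in_faces[OF arr C] by blast+
  show ?thesis
  proof (rule that[OF G])
    show "\<exists>H\<in>A. sigma H (cell A p) = Zero" using p(2) sigma_cell[OF arr] by simp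
    show "sigma H C \<noteq> sigma H D" if "H \<in> A" "sigma H (cell A p) = Zero" for H
      using p(3)[OF that(1)] that sigma_cell[OF arr that(1)] c(2) d(2) by simp
  qed
qed

section \<open>Subcomplexes closed under the Tits product with the opposite region\<close>

lemma Des_eq_iff_tits_closed:
  assumes arr: "arrangement A" and B: "B \<in> regions A" and cx: "subcomplex A \<Delta>"
  shows "Des A B \<Delta> = \<Delta> \<longleftrightarrow> (\<forall>F\<in>\<Delta>. tits A F (opp B) \<in> \<Delta>)"
proof -
  have "F \<in> \<Delta>" if "F \<in> faces A" "tits A F (opp B) \<in> \<Delta>" for F
    using cx that face_of_tits[OF arr that(1) opp_region(1)[OF arr B]] unfolding subcomplex_def by blast
  then show ?thesis using cx unfolding Des_def subcomplex_def by blast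
qed

lemma sigma_tits_opp:
  assumes arr: "arrangement A" and "F \<in> faces A" "B \<in> regions A" "H \<in> A"
  shows "sigma H (tits A F (opp B)) = (if sigma H F \<noteq> Zero then sigma H F else opp_sgn (sigma H B))"
  using tits_region(2)[OF arr \<open>F \<in> faces A\<close> opp_region(1)[OF arr \<open>B \<in> regions A\<close>]]
    opp_region(2)[OF arr \<open>B \<in> regions A\<close>] \<open>H \<in> A\<close> by simp

lemma tits_closed_maximal_in_regions:
  assumes arr: "arrangement A" and B: "B \<in> regions A" and "\<Delta> \<subseteq> faces A"
    and closed: "\<forall>F\<in>\<Delta>. tits A F (opp B) \<in> \<Delta>"
    and M: "M \<in> \<Delta>" "\<forall>K\<in>\<Delta>. M \<subseteq> K \<longrightarrow> K = M"
  shows "M \<in> regions A"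
proof -
  have "M \<in> faces A" using M(1) \<open>\<Delta> \<subseteq> faces A\<close> by blast
  have "M \<subseteq> tits A M (opp B)"
    using face_of_tits[OF arr \<open>M \<in> faces A\<close> opp_region(1)[OF arr B]] by (rule face_of_imp_subset)
  then have "tits A M (opp B) = M" using M closed by blast
  then show ?thesis using tits_region(1)[OF arr \<open>M \<in> faces A\<close> opp_region(1)[OF arr B]] by simp
qed

lemma tits_closed_imp_pure:
  assumes arr: "arrangement A" and B: "B \<in> regions A" and "\<Delta> \<subseteq> faces A"
    and closed: "\<forall>F\<in>\<Delta>. tits A F (opp B) \<in> \<Delta>"
  shows "pure \<Delta>"
  unfolding pure_def
  using tits_closed_maximal_in_regions[OF assms] face_in_regions_iff_aff_dim[OF arr]
    regions_subset_faces[OF arr] by (metis subsetD)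

lemma tits_closed_wall_crossing:
  assumes arr: "arrangement A" and B: "B \<in> regions A" and cx: "subcomplex A \<Delta>"
    and closed: "\<forall>F\<in>\<Delta>. tits A F (opp B) \<in> \<Delta>"
    and C: "C \<in> \<Delta>" "C \<in> regions A" and D: "D \<in> regions A" "C \<noteq> D" and le: "weak_le A B C D"
  obtains C' where "C' \<in> \<Delta>" "C' \<in> regions A" "weak_le A B C' D"
    "separating A C' D \<subset> separating A C D"
proof -
  obtain G where G: "G \<in> faces A" "G face_of C" "\<exists>H\<in>A. sigma H G = Zero"
    and wall: "\<And>H. H \<in> A \<Longrightarrow> sigma H G = Zero \<Longrightarrow> sigma H C \<noteq> sigma H D"
    using exists_wall[OF arr C(2) D] by blast
  define C' where "C' = tits A G (opp B)"
  have "G \<in> \<Delta>" using cx C(1) G(1,2) unfolding subcomplex_def by blast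
  then have "C' \<in> \<Delta>" "C' \<in> regions A"
    using closed tits_region(1)[OF arr G(1) opp_region(1)[OF arr B]] by (auto simp: C'_def)
  have nonzero: "sigma H B \<noteq> Zero" "sigma H C \<noteq> Zero" "sigma H D \<noteq> Zero" if "H \<in> A" for H
    using that B C(2) D(1) regions_subset_faces[OF arr] face_in_regions_iff_sigma[OF arr] by blast+
  \<comment> \<open>H separates C from D; if it also separated B from C, it would not separate B from D\<close>
  have through_wall: "sigma H C = sigma H B \<and> sigma H C' = sigma H D"
    if "H \<in> A" "sigma H G = Zero" for H
  proof -
    have "sigma H C = sigma H B"
    proof (rule ccontr)
      assume "sigma H C \<noteq> sigma H B"
      then have "sigma H B \<noteq> sigma H D"
        using le that(1) by (auto simp: weak_le_def separating_def)
      then show False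
        using wall[OF that] \<open>sigma H C \<noteq> sigma H B\<close> nonzero[OF that(1)]
        by (metis opp_sgn_if_nonzero_neq)
    qed
    moreover have "sigma H C' = opp_sgn (sigma H B)"
      unfolding C'_def using sigma_tits_opp[OF arr G(1) B that(1)] that(2) by simp
    ultimately show ?thesis
      using wall[OF that] nonzero[OF that(1)] opp_sgn_if_nonzero_neq by metis
  qed
  have off_wall: "sigma H C' = sigma H C" if "H \<in> A" "sigma H G \<noteq> Zero" for H
    using sigma_tits_opp[OF arr G(1) B that(1)] that(2)
      sigma_le_if_subset[OF arr G(1) _ face_of_imp_subset[OF G(2)] that(1)]
      regions_subset_faces[OF arr] C(2) by (auto simp: C'_def)
  show ?thesis
  proof (rule that[OF \<open>C' \<in> \<Delta>\<close> \<open>C' \<in> regions A\<close>])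
    show "weak_le A B C' D"
      using le through_wall off_wall unfolding weak_le_def separating_def by fastforce
    have "separating A C' D = separating A C D - {H\<in>A. sigma H G = Zero}"
      using through_wall off_wall unfolding separating_def by fastforce
    moreover have "{H\<in>A. sigma H G = Zero} \<inter> separating A C D \<noteq> {}"
      using G(3) wall unfolding separating_def by blast
    ultimately show "separating A C' D \<subset> separating A C D" by blast
  qed
qed

lemma tits_closed_imp_upper_set:
  assumes arr: "arrangement A" and B: "B \<in> regions A" and cx: "subcomplex A \<Delta>"
    and closed: "\<forall>F\<in>\<Delta>. tits A F (opp B) \<in> \<Delta>"
  shows "upper_set A B (\<Delta> \<inter> regions A)"
proof -
  have "D \<in> \<Delta>" if "C \<in> \<Delta>" "C \<in> regions A" "D \<in> regions A" "weak_le A B C D" for C D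
    using that
  proof (induction "card (separating A C D)" arbitrary: C rule: less_induct)
    case less
    show ?case
    proof (cases "C = D")
      case True
      then show ?thesis using less.prems by simp
    next
      case False
      obtain C' where C': "C' \<in> \<Delta>" "C' \<in> regions A" "weak_le A B C' D"
        "separating A C' D \<subset> separating A C D"
        using tits_closed_wall_crossing[OF arr B cx closed less.prems(1,2,3) False less.prems(4)] .
      have "finite (separating A C D)" using arr by (simp add: arrangement_def separating_def)
      then have "card (separating A C' D) < card (separating A C D)"
        using C'(4) by (rule psubset_card_mono)
      then show ?thesis using less.hyps C'(1-3) less.prems(3) by blast
    qed
  qed
  then show ?thesis unfolding upper_set_def by blast
qed

lemma upper_set_imp_tits_closed:
  fixes A :: "'a::euclidean_space set set"
  assumes arr: "arrangement A" and B: "B \<in> regions A" and faces: "\<Delta> \<subseteq> faces A"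
    and "pure \<Delta>" and R0: "R0 \<in> \<Delta>" "R0 \<in> regions A" and up: "upper_set A B (\<Delta> \<inter> regions A)"
  shows "\<forall>F\<in>\<Delta>. tits A F (opp B) \<in> \<Delta>"
proof
  fix F assume "F \<in> \<Delta>"
  then have F: "F \<in> faces A" using faces by blast
  have "finite \<Delta>" using finite_faces[OF arr] faces by (rule finite_subset[rotated])
  then obtain M where M: "M \<in> \<Delta>" "F \<subseteq> M" "\<forall>K\<in>\<Delta>. M \<subseteq> K \<longrightarrow> M = K"
    using finite_has_maximal2[OF _ \<open>F \<in> \<Delta>\<close>] by blast
  have "M \<in> faces A" using M(1) faces by blast
  have "\<forall>K\<in>\<Delta>. R0 \<subseteq> K \<longrightarrow> K = R0"
    using region_maximal[OF arr R0(2)] faces by blast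
  then have "aff_dim M = aff_dim R0"
    using \<open>pure \<Delta>\<close> M(1,3) R0(1) unfolding pure_def by metis
  then have "M \<in> regions A"
    using face_in_regions_iff_aff_dim[OF arr] R0(2) \<open>M \<in> faces A\<close> regions_subset_faces[OF arr] by auto
  moreover have "weak_le A B M (tits A F (opp B))"
  proof -
    have "sigma H B \<noteq> sigma H (tits A F (opp B))" if "H \<in> A" "sigma H B \<noteq> sigma H M" for H
      using sigma_tits_opp[OF arr F B that(1)] that(2) sigma_le_if_subset[OF arr F \<open>M \<in> faces A\<close> M(2) that(1)]
        B regions_subset_faces[OF arr] face_in_regions_iff_sigma[OF arr] that(1)
      by (cases "sigma H B") auto
    then show ?thesis unfolding weak_le_def separating_def by blast
  qed
  ultimately show "tits A F (opp B) \<in> \<Delta>"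
    using up M(1) tits_region(1)[OF arr F opp_region(1)[OF arr B]] unfolding upper_set_def by blast
qed

theorem lemma3p4:
  fixes A :: "'a::euclidean_space set set" and B :: "'a set" and \<Delta> :: "'a set set"
  assumes "arrangement A"
    and "B \<in> regions A"
    and "subcomplex A \<Delta>"
    and "\<Delta> \<noteq> {}"
  shows "Des A B \<Delta> = \<Delta> \<longleftrightarrow>
    (pure \<Delta> \<and> \<Delta> \<inter> regions A \<noteq> {} \<and> upper_set A B (\<Delta> \<inter> regions A))"
proof -
  have faces: "\<Delta> \<subseteq> faces A" using assms(3) by (simp add: subcomplex_def)
  have "(\<forall>F\<in>\<Delta>. tits A F (opp B) \<in> \<Delta>) \<longleftrightarrow>
      (pure \<Delta> \<and> \<Delta> \<inter> regions A \<noteq> {} \<and> upper_set A B (\<Delta> \<inter> regions A))"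
  proof
    assume closed: "\<forall>F\<in>\<Delta>. tits A F (opp B) \<in> \<Delta>"
    obtain F where "F \<in> \<Delta>" using assms(4) by blast
    then have "tits A F (opp B) \<in> \<Delta> \<inter> regions A"
      using closed faces tits_region(1)[OF assms(1) _ opp_region(1)[OF assms(1,2)]] by blast
    then show "pure \<Delta> \<and> \<Delta> \<inter> regions A \<noteq> {} \<and> upper_set A B (\<Delta> \<inter> regions A)"
      using tits_closed_imp_pure[OF assms(1,2) faces closed]
        tits_closed_imp_upper_set[OF assms(1-3) closed] by blast
  next
    assume "pure \<Delta> \<and> \<Delta> \<inter> regions A \<noteq> {} \<and> upper_set A B (\<Delta> \<inter> regions A)"
    then show "\<forall>F\<in>\<Delta>. tits A F (opp B) \<in> \<Delta>"
      using upper_set_imp_tits_closed[OF assms(1,2) faces] by blast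
  qed
  then show ?thesis using Des_eq_iff_tits_closed[OF assms(1-3)] by simp
qed

end
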